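(* Let $A,B$ be mutually avoiding point sets with $A\cup B$ in general position, let $x_1\prec x_2\prec\cdots\prec x_n$ be points of $A$ and $y_1\prec y_2\prec\cdots\prec y_n$ be points of $B$. Then the straight-line drawing of the ladder graph formed by the paths $x_1x_2\cdots x_n$ and $y_1y_2\cdots y_n$ and the edges $x_iy_i$, $i\in[n]$, is non-crossing.
   Context: Two finite point sets $A,B\subset\mathbb{R}^2$ are mutually avoiding if $|A|,|B|\ge2$, no line through two points of $A$ intersects the convex hull of $B$, and no line through two points of $B$ intersects the convex hull of $A$. For such a pair there are unique total orders $\prec$ on $A$ and on $B$ such that every point of $B$ sees the points of $A$ consecutively in clockwise order according to $\prec$, and every point of $A$ sees the points of $B$ consecutively in counterclockwise order according to $\prec$. Non-crossing means no two edge segments share a point other than a common endpoint. *)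

theory Defs
  imports "HOL-Analysis.Analysis"
begin

type_synonym point = "real \<times> real"

text \<open>Orientation determinant: positive iff p, q, r make a counterclockwise turn.\<close>
definition orient :: "point \<Rightarrow> point \<Rightarrow> point \<Rightarrow> real" where
  "orient p q r = (fst q - fst p) * (snd r - snd p) - (snd q - snd p) * (fst r - fst p)"

definition general_position :: "point set \<Rightarrow> bool" where
  "general_position S \<longleftrightarrow>
     (\<forall>p\<in>S. \<forall>q\<in>S. \<forall>r\<in>S. p \<noteq> q \<and> p \<noteq> r \<and> q \<noteq> r \<longrightarrow> orient p q r \<noteq> 0)"

definition mutually_avoiding :: "point set \<Rightarrow> point set \<Rightarrow> bool" where
  "mutually_avoiding A B \<longleftrightarrow>
     finite A \<and> finite B \<and> card A \<ge> 2 \<and> card B \<ge> 2 \<and>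
     (\<forall>a1\<in>A. \<forall>a2\<in>A. a1 \<noteq> a2 \<longrightarrow> affine hull {a1, a2} \<inter> convex hull B = {}) \<and>
     (\<forall>b1\<in>B. \<forall>b2\<in>B. b1 \<noteq> b2 \<longrightarrow> affine hull {b1, b2} \<inter> convex hull A = {})"

definition precA :: "point set \<Rightarrow> point set \<Rightarrow> point \<Rightarrow> point \<Rightarrow> bool" where
  "precA A B a a' \<longleftrightarrow> a \<in> A \<and> a' \<in> A \<and> (\<forall>b\<in>B. orient b a a' < 0)"

definition precB :: "point set \<Rightarrow> point set \<Rightarrow> point \<Rightarrow> point \<Rightarrow> bool" where
  "precB A B b b' \<longleftrightarrow> b \<in> B \<and> b' \<in> B \<and> (\<forall>a\<in>A. orient a b b' > 0)"

definition ladder_edges :: "nat \<Rightarrow> (nat \<Rightarrow> point) \<Rightarrow> (nat \<Rightarrow> point) \<Rightarrow> (point \<times> point) set" where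
  "ladder_edges n x y =
     {(x i, x (Suc i)) | i. 1 \<le> i \<and> i < n} \<union>
     {(y i, y (Suc i)) | i. 1 \<le> i \<and> i < n} \<union>
     {(x i, y i) | i. 1 \<le> i \<and> i \<le> n}"

definition non_crossing :: "(point \<times> point) set \<Rightarrow> bool" where
  "non_crossing E \<longleftrightarrow>
     (\<forall>(p, q)\<in>E. \<forall>(r, s)\<in>E. {p, q} \<noteq> {r, s} \<longrightarrow>
        closed_segment p q \<inter> closed_segment r s \<subseteq> {p, q} \<inter> {r, s})"

end

theory Submission
  imports Defs
begin

text \<open>
  The rung line through \<open>x j\<close> and \<open>y j\<close> separates the ladder: seen from \<open>y j\<close> the points of
  \<open>A\<close> turn clockwise along \<open>\<prec>\<close>, and seen from \<open>x j\<close> the points of \<open>B\<close> turn counterclockwise,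
  so every vertex of index below \<open>j\<close> lies strictly on one side of that line and every vertex
  of index above \<open>j\<close> strictly on the other. Two edges whose index ranges are separated by
  some \<open>j\<close> are therefore disjoint. An edge of the \<open>A\<close>-path lies on a line through two points
  of \<open>A\<close>, which misses the convex hull of \<open>B\<close> and hence every edge of the \<open>B\<close>-path. All
  remaining pairs share an endpoint, where general position rules out any overlap.
  Transitivity of \<open>\<prec>\<close>, needed to compare non-consecutive vertices, comes from a second point
  of the other set: by mutual avoidance the whole set lies on one side of the line through
  the two observers.
\<close>

lemma orient_rotate: "orient p q r = orient q r p"
  unfolding orient_def by algebra

lemma orient_swap: "orient p q r = - orient p r q"
  unfolding orient_def by algebra

lemma orient_degenerate [simp]: "orient p q p = 0" "orient p q q = 0" "orient p p q = 0"
  unfolding orient_def by algebra+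

lemma orient_closed_segment:
  assumes "z \<in> closed_segment r s"
  obtains u where "0 \<le> u" "u \<le> 1" "orient p q z = (1 - u) * orient p q r + u * orient p q s"
proof -
  obtain u where u: "0 \<le> u" "u \<le> 1" "z = (1 - u) *\<^sub>R r + u *\<^sub>R s"
    using assms by (auto simp: in_segment)
  have "orient p q z = (1 - u) * orient p q r + u * orient p q s"
    unfolding u(3) orient_def by (simp add: algebra_simps)
  with u that show ?thesis by blast
qed

lemma orient_neg_closed_segment:
  assumes "orient p q r < 0" "orient p q s < 0" "z \<in> closed_segment r s"
  shows "orient p q z < 0"
proof -
  obtain u where u: "0 \<le> u" "u \<le> 1" "orient p q z = (1 - u) * orient p q r + u * orient p q s"
    using orient_closed_segment[OF assms(3)] .
  have "(1 - u) * orient p q r \<le> 0" "u * orient p q s \<le> 0"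
    using u assms by (simp_all add: mult_nonneg_nonpos)
  moreover have "(1 - u) * orient p q r < 0 \<or> u * orient p q s < 0"
    using u assms by (cases "u = 0") (simp_all add: mult_pos_neg)
  ultimately show ?thesis using u(3) by linarith
qed

lemma orient_nonneg_closed_segment:
  assumes "0 \<le> orient p q r" "0 \<le> orient p q s" "z \<in> closed_segment r s"
  shows "0 \<le> orient p q z"
proof -
  obtain u where "0 \<le> u" "u \<le> 1" "orient p q z = (1 - u) * orient p q r + u * orient p q s"
    using orient_closed_segment[OF assms(3)] .
  then show ?thesis using assms by simp
qed

lemma closed_segments_disjoint_if_separated:
  assumes "orient u v p < 0" "orient u v q < 0" "0 \<le> orient u v r" "0 \<le> orient u v s"
  shows "closed_segment p q \<inter> closed_segment r s = {}"
  using orient_neg_closed_segment[OF assms(1,2)] orient_nonneg_closed_segment[OF assms(3,4)]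
  by force

lemma closed_segment_inter_common_endpoint:
  assumes "orient p q s \<noteq> 0"
  shows "closed_segment p q \<inter> closed_segment p s \<subseteq> {p}"
proof
  fix z assume z: "z \<in> closed_segment p q \<inter> closed_segment p s"
  obtain u where u: "0 \<le> u" "u \<le> 1" "z = (1 - u) *\<^sub>R p + u *\<^sub>R s"
    using z by (auto simp: in_segment)
  have "orient p q z = 0"
    using z orient_closed_segment[of z p q p q] by auto
  moreover have "orient p q z = u * orient p q s"
    unfolding u(3) orient_def by (simp add: algebra_simps)
  ultimately have "u = 0" using assms by simp
  then show "z \<in> {p}" using u by simp
qed

lemma orient_eq_0_imp_in_affine_hull:
  assumes "a \<noteq> b" "orient a b z = 0"
  shows "z \<in> affine hull {a, b}"
proof -
  define d where "d = b - a"
  define w where "w = z - a"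
  have nz: "fst d ^ 2 + snd d ^ 2 \<noteq> 0"
    using assms(1) unfolding d_def by (auto simp: prod_eq_iff sum_power2_eq_zero_iff)
  have collinear: "fst d * snd w = snd d * fst w"
    using assms(2) unfolding orient_def d_def w_def by simp
  define t where "t = (fst d * fst w + snd d * snd w) / (fst d ^ 2 + snd d ^ 2)"
  have "fst w * (fst d ^ 2 + snd d ^ 2) = (fst d * fst w + snd d * snd w) * fst d"
    "snd w * (fst d ^ 2 + snd d ^ 2) = (fst d * fst w + snd d * snd w) * snd d"
    using collinear by (simp_all add: power2_eq_square algebra_simps)
  then have "w = t *\<^sub>R d"
    using nz unfolding t_def by (simp add: prod_eq_iff field_simps)
  then have "z = (1 - t) *\<^sub>R a + t *\<^sub>R b"
    unfolding d_def w_def by (simp add: prod_eq_iff algebra_simps)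
  then show ?thesis unfolding affine_hull_2 by force
qed

lemma orient_eq_0_on_closed_segment:
  assumes "orient a b t * orient a b t' \<le> 0"
  obtains z where "z \<in> closed_segment t t'" "orient a b z = 0"
proof (cases "orient a b t = 0")
  case False
  let ?f = "orient a b"
  have "(0 < ?f t \<and> ?f t' \<le> 0) \<or> (?f t < 0 \<and> 0 \<le> ?f t')"
    using assms False by (auto simp: mult_le_0_iff)
  then have ne: "?f t - ?f t' \<noteq> 0" and u: "0 \<le> ?f t / (?f t - ?f t')" "?f t / (?f t - ?f t') \<le> 1"
    by (auto simp: divide_simps)
  define u where "u = ?f t / (?f t - ?f t')"
  define z where "z = (1 - u) *\<^sub>R t + u *\<^sub>R t'"
  have "?f z = (1 - u) * ?f t + u * ?f t'"
    unfolding z_def orient_def by (simp add: algebra_simps)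
  also have "\<dots> = 0" unfolding u_def using ne by (simp add: field_simps)
  finally show ?thesis
    using that u unfolding z_def u_def in_segment by blast
qed (use that ends_in_segment(1) in blast)

lemma orient_same_side_if_avoiding:
  assumes avoid: "affine hull {a, b} \<inter> convex hull T = {}"
    and "a \<noteq> b" "t \<in> T" "t' \<in> T"
  shows "0 < orient a b t * orient a b t'"
proof (rule ccontr)
  assume "\<not> ?thesis"
  then have "orient a b t * orient a b t' \<le> 0" by simp
  then obtain z where z: "z \<in> closed_segment t t'" "orient a b z = 0"
    by (rule orient_eq_0_on_closed_segment)
  have "closed_segment t t' \<subseteq> convex hull T"
    using assms(3,4) by (simp add: closed_segment_subset hull_inc)
  with z(1) have "z \<in> convex hull T" by blast
  moreover have "z \<in> affine hull {a, b}"
    using orient_eq_0_imp_in_affine_hull[OF assms(2) z(2)] .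
  ultimately show False using avoid by blast
qed

lemma orient_trans_same_side:
  assumes "0 < orient b c p * orient b c q" "0 < orient b c q * orient b c r"
    and "orient b p q < 0" "orient b q r < 0"
  shows "orient b p r < 0"
proof -
  \<comment> \<open>the three values \<open>orient b c _\<close> share a sign, which the identity passes on\<close>
  have "orient b p r * orient b c q = orient b p q * orient b c r + orient b q r * orient b c p"
    unfolding orient_def by algebra
  with assms show ?thesis
    by (smt (verit) mult_less_0_iff zero_less_mult_iff)
qed

lemma mutually_avoiding_commute: "mutually_avoiding A B \<longleftrightarrow> mutually_avoiding B A"
  unfolding mutually_avoiding_def by blast

lemma mutually_avoiding_other_point:
  assumes "mutually_avoiding A B" "a \<in> A"
  obtains a' where "a' \<in> A" "a' \<noteq> a"
proof -
  have "finite A" "2 \<le> card A" using assms(1) unfolding mutually_avoiding_def by auto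
  then have "A \<noteq> {a}" by auto
  with assms(2) that show ?thesis by blast
qed

lemma mutually_avoiding_disjoint:
  assumes "mutually_avoiding A B"
  shows "A \<inter> B = {}"
proof (rule ccontr)
  assume "A \<inter> B \<noteq> {}"
  then obtain z where z: "z \<in> A" "z \<in> B" by blast
  obtain a where "a \<in> A" "a \<noteq> z" using mutually_avoiding_other_point[OF assms z(1)] .
  then have "affine hull {z, a} \<inter> convex hull B = {}"
    using assms z(1) unfolding mutually_avoiding_def by metis
  moreover have "z \<in> affine hull {z, a}" "z \<in> convex hull B"
    using z by (simp_all add: hull_inc)
  ultimately show False by blast
qed

lemma closed_segments_disjoint_if_mutually_avoiding:
  assumes "mutually_avoiding A B" "a \<in> A" "a' \<in> A" "a \<noteq> a'" "b \<in> B" "b' \<in> B"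
  shows "closed_segment a a' \<inter> closed_segment b b' = {}"
proof -
  have "closed_segment a a' \<subseteq> affine hull {a, a'}"
    by (simp add: segment_convex_hull convex_hull_subset_affine_hull)
  moreover have "closed_segment b b' \<subseteq> convex hull B"
    using assms(5,6) by (simp add: closed_segment_subset hull_inc)
  moreover have "affine hull {a, a'} \<inter> convex hull B = {}"
    using assms(1-4) unfolding mutually_avoiding_def by blast
  ultimately show ?thesis by blast
qed

lemma precA_trans:
  assumes "mutually_avoiding A B" "precA A B p q" "precA A B q r"
  shows "precA A B p r"
proof -
  have A: "p \<in> A" "q \<in> A" "r \<in> A" using assms(2,3) unfolding precA_def by auto
  have "orient b p r < 0" if b: "b \<in> B" for b
  proof -
    obtain c where c: "c \<in> B" "b \<noteq> c"
      using mutually_avoiding_other_point[OF assms(1)[THEN mutually_avoiding_commute[THEN iffD1]] b]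
      by metis
    then have "affine hull {b, c} \<inter> convex hull A = {}"
      using assms(1) b unfolding mutually_avoiding_def by blast
    from orient_same_side_if_avoiding[OF this c(2)] A
    have "0 < orient b c p * orient b c q" "0 < orient b c q * orient b c r" by auto
    moreover have "orient b p q < 0" "orient b q r < 0"
      using assms(2,3) b unfolding precA_def by auto
    ultimately show ?thesis by (rule orient_trans_same_side)
  qed
  with A show ?thesis unfolding precA_def by blast
qed

lemma precB_eq_precA: "precB A B b b' \<longleftrightarrow> precA B A b' b"
  unfolding precA_def precB_def using orient_swap[of _ b b'] by auto

lemma precB_trans:
  assumes "mutually_avoiding A B" "precB A B p q" "precB A B q r"
  shows "precB A B p r"
  using assms precA_trans[of B A r q p] by (simp add: precB_eq_precA mutually_avoiding_commute)

lemma stepwise_chain: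
  assumes trans: "\<And>a b c. R a b \<Longrightarrow> R b c \<Longrightarrow> R a c"
    and step: "\<And>k. m \<le> k \<Longrightarrow> k < n \<Longrightarrow> R (f k) (f (Suc k))"
    and "m \<le> i" "i < j" "j \<le> n"
  shows "R (f i) (f j)"
  using assms(4,5)
proof (induction j)
  case (Suc j)
  show ?case
  proof (cases "i = j")
    case False
    with Suc have "R (f i) (f j)" by simp
    moreover have "R (f j) (f (Suc j))" using Suc.prems \<open>m \<le> i\<close> by (intro step) auto
    ultimately show ?thesis by (rule trans)
  qed (use step Suc.prems \<open>m \<le> i\<close> in auto)
qed simp

definition touch_only_at_endpoints :: "point \<Rightarrow> point \<Rightarrow> point \<Rightarrow> point \<Rightarrow> bool" where
  "touch_only_at_endpoints p q r s \<longleftrightarrow>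
     closed_segment p q \<inter> closed_segment r s \<subseteq> {p, q} \<inter> {r, s}"

lemma touch_only_at_endpoints_sym:
  "touch_only_at_endpoints p q r s \<longleftrightarrow> touch_only_at_endpoints r s p q"
  unfolding touch_only_at_endpoints_def by blast

lemma touch_only_at_endpoints_commute:
  "touch_only_at_endpoints p q r s \<longleftrightarrow> touch_only_at_endpoints q p r s"
  unfolding touch_only_at_endpoints_def by (simp add: closed_segment_commute insert_commute)

lemma touch_only_at_endpointsI_disjoint:
  "closed_segment p q \<inter> closed_segment r s = {} \<Longrightarrow> touch_only_at_endpoints p q r s"
  unfolding touch_only_at_endpoints_def by simp

lemma touch_only_at_endpoints_common_endpoint:
  "orient p q s \<noteq> 0 \<Longrightarrow> touch_only_at_endpoints p q p s"
  unfolding touch_only_at_endpoints_def using closed_segment_inter_common_endpoint by blast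

lemma touch_only_at_endpoints_if_common_endpoint:
  assumes "general_position S" "{p, q, r, s} \<subseteq> S" "p \<noteq> q" "r \<noteq> s" "{p, q} \<noteq> {r, s}"
    and "p = r \<or> p = s \<or> q = r \<or> q = s"
  shows "touch_only_at_endpoints p q r s"
proof -
  have fan: "touch_only_at_endpoints u v u w"
    if "u \<in> S" "v \<in> S" "w \<in> S" "u \<noteq> v" "u \<noteq> w" "v \<noteq> w" for u v w
    using assms(1) that unfolding general_position_def
    by (intro touch_only_at_endpoints_common_endpoint) blast
  have commute2: "touch_only_at_endpoints p q r s \<longleftrightarrow> touch_only_at_endpoints p q s r"
    by (metis touch_only_at_endpoints_commute touch_only_at_endpoints_sym)
  from assms(6) show ?thesis
  proof (elim disjE)
    assume "p = r" then show ?thesis using fan[of p q s] assms by auto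
  next
    assume "p = s" then show ?thesis using fan[of p q r] assms commute2 by auto
  next
    assume "q = r" then show ?thesis
      using fan[of q p s] assms touch_only_at_endpoints_commute[of p q] by auto
  next
    assume "q = s" then show ?thesis
      using fan[of q p r] assms commute2 touch_only_at_endpoints_commute[of p q] by auto
  qed
qed

lemma non_crossingI:
  "(\<And>p q r s. (p, q) \<in> E \<Longrightarrow> (r, s) \<in> E \<Longrightarrow> {p, q} \<noteq> {r, s} \<Longrightarrow>
     touch_only_at_endpoints p q r s) \<Longrightarrow> non_crossing E"
  unfolding non_crossing_def touch_only_at_endpoints_def by blast

locale ladder =
  fixes A B :: "point set" and n :: nat and x y :: "nat \<Rightarrow> point"
  assumes avoiding: "mutually_avoiding A B"
    and general: "general_position (A \<union> B)"
    and x_in: "\<And>i. 1 \<le> i \<Longrightarrow> i \<le> n \<Longrightarrow> x i \<in> A"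
    and y_in: "\<And>i. 1 \<le> i \<Longrightarrow> i \<le> n \<Longrightarrow> y i \<in> B"
    and x_step: "\<And>i. 1 \<le> i \<Longrightarrow> i < n \<Longrightarrow> precA A B (x i) (x (Suc i))"
    and y_step: "\<And>i. 1 \<le> i \<Longrightarrow> i < n \<Longrightarrow> precB A B (y i) (y (Suc i))"
begin

lemma x_order: "1 \<le> i \<Longrightarrow> i < j \<Longrightarrow> j \<le> n \<Longrightarrow> precA A B (x i) (x j)"
  by (rule stepwise_chain[where R = "precA A B"]) (use precA_trans[OF avoiding] x_step in auto)

lemma y_order: "1 \<le> i \<Longrightarrow> i < j \<Longrightarrow> j \<le> n \<Longrightarrow> precB A B (y i) (y j)"
  by (rule stepwise_chain[where R = "precB A B"]) (use precB_trans[OF avoiding] y_step in auto)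

lemma rung_orient_below:
  assumes "1 \<le> k" "k < j" "j \<le> n"
  shows "orient (x j) (y j) (x k) < 0" "orient (x j) (y j) (y k) < 0"
proof -
  have "orient (y j) (x k) (x j) < 0" "0 < orient (x j) (y k) (y j)"
    using x_order[OF assms] y_order[OF assms] x_in[of j] y_in[of j] assms
    by (auto simp: precA_def precB_def)
  then show "orient (x j) (y j) (x k) < 0" "orient (x j) (y j) (y k) < 0"
    using orient_rotate[of "x j" "y j" "x k"] orient_swap[of "x j" "y j" "y k"] by linarith+
qed

lemma rung_orient_from:
  assumes "1 \<le> j" "j \<le> k" "k \<le> n"
  shows "0 \<le> orient (x j) (y j) (x k)" "0 \<le> orient (x j) (y j) (y k)"
proof -
  have "orient (y j) (x j) (x k) \<le> 0 \<and> 0 \<le> orient (x j) (y j) (y k)"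
  proof (cases "j = k")
    case False
    then show ?thesis
      using x_order[of j k] y_order[of j k] x_in[of j] y_in[of j] assms
      by (fastforce simp: precA_def precB_def)
  qed simp
  then show "0 \<le> orient (x j) (y j) (x k)" "0 \<le> orient (x j) (y j) (y k)"
    using orient_rotate[of "x j" "y j" "x k"] orient_swap[of "y j" "x k" "x j"] by linarith+
qed

definition vertices_below :: "nat \<Rightarrow> point set" where
  "vertices_below j = x ` {1..<j} \<union> y ` {1..<j}"

definition vertices_from :: "nat \<Rightarrow> point set" where
  "vertices_from j = x ` {j..n} \<union> y ` {j..n}"

lemma touch_only_at_endpoints_across_rung:
  assumes "1 \<le> j" "j \<le> n" "p \<in> vertices_below j" "q \<in> vertices_below j"
    "r \<in> vertices_from j" "s \<in> vertices_from j"
  shows "touch_only_at_endpoints p q r s"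
proof (intro touch_only_at_endpointsI_disjoint closed_segments_disjoint_if_separated)
  show "orient (x j) (y j) p < 0" "orient (x j) (y j) q < 0"
    using assms rung_orient_below unfolding vertices_below_def by auto
  show "0 \<le> orient (x j) (y j) r" "0 \<le> orient (x j) (y j) s"
    using assms rung_orient_from unfolding vertices_from_def by auto
qed

lemma path_in: "f = x \<or> f = y \<Longrightarrow> 1 \<le> k \<Longrightarrow> k \<le> n \<Longrightarrow> f k \<in> A \<union> B"
  using x_in y_in by auto

lemma path_inj: "f = x \<or> f = y \<Longrightarrow> 1 \<le> i \<Longrightarrow> i < j \<Longrightarrow> j \<le> n \<Longrightarrow> f i \<noteq> f j"
  using rung_orient_below[of i j] by auto

lemma x_neq_y: "1 \<le> i \<Longrightarrow> i \<le> n \<Longrightarrow> 1 \<le> j \<Longrightarrow> j \<le> n \<Longrightarrow> x i \<noteq> y j"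
  using mutually_avoiding_disjoint[OF avoiding] x_in[of i] y_in[of j] by auto

lemma touch_only_at_endpoints_path_edges_less:
  assumes "f = x \<or> f = y" "1 \<le> i" "i < j" "j < n"
  shows "touch_only_at_endpoints (f i) (f (Suc i)) (f j) (f (Suc j))"
proof (cases "j = Suc i")
  case True
  show ?thesis
    by (rule touch_only_at_endpoints_if_common_endpoint[OF general])
      (use assms True path_in[OF assms(1)] path_inj[OF assms(1)] path_inj[OF assms(1), THEN not_sym]
        in \<open>auto simp: doubleton_eq_iff\<close>)
next
  case False
  then show ?thesis
    using assms by (intro touch_only_at_endpoints_across_rung[of j])
      (auto simp: vertices_below_def vertices_from_def)
qed

lemma touch_only_at_endpoints_path_edges:
  assumes "f = x \<or> f = y" "1 \<le> i" "1 \<le> j" "i < n" "j < n"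
    and "{f i, f (Suc i)} \<noteq> {f j, f (Suc j)}"
  shows "touch_only_at_endpoints (f i) (f (Suc i)) (f j) (f (Suc j))"
  using assms touch_only_at_endpoints_path_edges_less[OF assms(1), of i j]
    touch_only_at_endpoints_path_edges_less[OF assms(1), of j i]
  by (cases i j rule: linorder_cases) (auto simp: touch_only_at_endpoints_sym)

lemma touch_only_at_endpoints_rungs_less:
  assumes "1 \<le> i" "i < j" "j \<le> n"
  shows "touch_only_at_endpoints (x i) (y i) (x j) (y j)"
  using assms by (intro touch_only_at_endpoints_across_rung[of j])
    (auto simp: vertices_below_def vertices_from_def)

lemma touch_only_at_endpoints_rungs:
  assumes "1 \<le> i" "1 \<le> j" "i \<le> n" "j \<le> n" "{x i, y i} \<noteq> {x j, y j}"
  shows "touch_only_at_endpoints (x i) (y i) (x j) (y j)"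
  using assms touch_only_at_endpoints_rungs_less[of i j] touch_only_at_endpoints_rungs_less[of j i]
  by (cases i j rule: linorder_cases) (auto simp: touch_only_at_endpoints_sym)

lemma touch_only_at_endpoints_path_edge_rung:
  assumes "f = x \<or> f = y" "1 \<le> i" "i < n" "1 \<le> k" "k \<le> n"
  shows "touch_only_at_endpoints (f i) (f (Suc i)) (x k) (y k)"
proof -
  consider "k = i \<or> k = Suc i" | "k < i" | "Suc i < k" by linarith
  then show ?thesis
  proof cases
    case 1
    show ?thesis
      by (rule touch_only_at_endpoints_if_common_endpoint[OF general])
        (use assms 1 x_in y_in path_in[OF assms(1)] path_inj[OF assms(1), of i "Suc i"] x_neq_y
          x_neq_y[THEN not_sym] in \<open>auto simp: doubleton_eq_iff\<close>)
  next
    case 2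
    then show ?thesis
      using assms touch_only_at_endpoints_across_rung[of i "x k" "y k" "f i" "f (Suc i)"]
      by (auto simp: vertices_below_def vertices_from_def touch_only_at_endpoints_sym)
  next
    case 3
    then show ?thesis
      using assms by (intro touch_only_at_endpoints_across_rung[of k])
        (auto simp: vertices_below_def vertices_from_def)
  qed
qed

lemma touch_only_at_endpoints_x_edge_y_edge:
  assumes "1 \<le> i" "i < n" "1 \<le> j" "j < n"
  shows "touch_only_at_endpoints (x i) (x (Suc i)) (y j) (y (Suc j))"
  using assms x_in path_inj[of x i "Suc i"] y_in
  by (intro touch_only_at_endpointsI_disjoint closed_segments_disjoint_if_mutually_avoiding[OF avoiding])
    auto

lemma non_crossing_ladder_edges: "non_crossing (ladder_edges n x y)"
proof (rule non_crossingI)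
  note swap = touch_only_at_endpoints_sym[THEN iffD1]
  fix p q r s
  assume "(p, q) \<in> ladder_edges n x y" "(r, s) \<in> ladder_edges n x y" "{p, q} \<noteq> {r, s}"
  then show "touch_only_at_endpoints p q r s"
    unfolding ladder_edges_def
    by (elim UnE CollectE exE conjE Pair_inject; hypsubst)
      (blast intro: touch_only_at_endpoints_path_edges touch_only_at_endpoints_rungs
        touch_only_at_endpoints_path_edge_rung touch_only_at_endpoints_x_edge_y_edge
        touch_only_at_endpoints_path_edge_rung[THEN swap]
        touch_only_at_endpoints_x_edge_y_edge[THEN swap])+
qed

end

theorem mainTheorem9:
  fixes A B :: "point set" and n :: nat and x y :: "nat \<Rightarrow> point"
  assumes "mutually_avoiding A B"
    and "general_position (A \<union> B)"
    and "\<forall>i\<in>{1..n}. x i \<in> A \<and> y i \<in> B"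
    and "\<forall>i. 1 \<le> i \<and> i < n \<longrightarrow> precA A B (x i) (x (Suc i))"
    and "\<forall>i. 1 \<le> i \<and> i < n \<longrightarrow> precB A B (y i) (y (Suc i))"
  shows "non_crossing (ladder_edges n x y)"
proof -
  interpret ladder A B n x y
    using assms by unfold_locales auto
  show ?thesis by (rule non_crossing_ladder_edges)
qed

end
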